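(* For every integer $j$ with $j\geq 20$ or $j\in\{15,16,17\}$, we have $R_1^{\mathcal{BIP}}(4,j)=2j-1$, where $\mathcal{BIP}$ is the class of bipartite graphs.
   Context: All graphs are finite and simple. For a graph $G$ and a nonnegative integer $k$, a $k$-sparse $j$-set is a set of $j$ vertices of $G$ inducing a subgraph of maximum degree at most $k$; a $k$-dense $i$-set is a set of $i$ vertices of $G$ that is $k$-sparse in the complement of $G$. For a graph class $\mathcal{G}$, $R_k^{\mathcal{G}}(i,j)$ is the smallest natural number $n$ such that every graph on $n$ vertices in $\mathcal{G}$ has either a $k$-dense $i$-set or a $k$-sparse $j$-set. *)

theory Defs
  imports Main
begin

definition simple_graph :: "'a set \<Rightarrow> ('a \<Rightarrow> 'a \<Rightarrow> bool) \<Rightarrow> bool" where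
  "simple_graph V E \<longleftrightarrow> finite V \<and>
     (\<forall>u v. E u v \<longrightarrow> u \<in> V \<and> v \<in> V \<and> u \<noteq> v \<and> E v u)"

definition bipartite :: "'a set \<Rightarrow> ('a \<Rightarrow> 'a \<Rightarrow> bool) \<Rightarrow> bool" where
  "bipartite V E \<longleftrightarrow> (\<exists>A. A \<subseteq> V \<and>
     (\<forall>u\<in>V. \<forall>v\<in>V. E u v \<longrightarrow> (u \<in> A \<longleftrightarrow> v \<notin> A)))"

definition compl_graph :: "'a set \<Rightarrow> ('a \<Rightarrow> 'a \<Rightarrow> bool) \<Rightarrow> ('a \<Rightarrow> 'a \<Rightarrow> bool)" where
  "compl_graph V E = (\<lambda>u v. u \<in> V \<and> v \<in> V \<and> u \<noteq> v \<and> \<not> E u v)"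

definition sparse_set :: "'a set \<Rightarrow> ('a \<Rightarrow> 'a \<Rightarrow> bool) \<Rightarrow> nat \<Rightarrow> nat \<Rightarrow> 'a set \<Rightarrow> bool" where
  "sparse_set V E k j S \<longleftrightarrow> S \<subseteq> V \<and> card S = j \<and>
     (\<forall>v\<in>S. card {u \<in> S. E v u} \<le> k)"

definition dense_set :: "'a set \<Rightarrow> ('a \<Rightarrow> 'a \<Rightarrow> bool) \<Rightarrow> nat \<Rightarrow> nat \<Rightarrow> 'a set \<Rightarrow> bool" where
  "dense_set V E k i S \<longleftrightarrow> sparse_set V (compl_graph V E) k i S"

definition R_bip :: "nat \<Rightarrow> nat \<Rightarrow> nat \<Rightarrow> nat" where
  "R_bip k i j = (LEAST n. \<forall>E :: nat \<Rightarrow> nat \<Rightarrow> bool.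
      simple_graph {..<n} E \<and> bipartite {..<n} E \<longrightarrow>
      (\<exists>S. dense_set {..<n} E k i S) \<or> (\<exists>S. sparse_set {..<n} E k j S))"

end

theory Submission
  imports Defs
begin

text \<open>One side of a bipartition of a graph on \<open>2j - 1\<close> vertices has \<open>j\<close> vertices and is
independent, which gives the upper bound. For the lower bound note that in a 1-dense 4-set
every vertex has two neighbours inside the set, so in a triangle-free graph the set spans a
4-cycle. It therefore suffices to find, for every \<open>m \<ge> 14\<close>, a \<open>C\<^sub>4\<close>-free bipartite graph on
\<open>2m\<close> vertices whose 1-sparse sets have at most \<open>m\<close> vertices. Such graphs are closed under
disjoint union, and the incidence graphs of four \<open>C\<^sub>4\<close>-free configurations with 7, 8, 10 and
11 lines, checked by exhaustive search, generate all \<open>m \<ge> 14\<close>.\<close>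

definition max_degree_le :: "('a \<Rightarrow> 'a \<Rightarrow> bool) \<Rightarrow> nat \<Rightarrow> 'a set \<Rightarrow> bool" where
  "max_degree_le E k S \<longleftrightarrow> (\<forall>v\<in>S. card {u\<in>S. E v u} \<le> k)"

lemma sparse_set_iff: "sparse_set V E k j S \<longleftrightarrow> S \<subseteq> V \<and> card S = j \<and> max_degree_le E k S"
  unfolding sparse_set_def max_degree_le_def ..

definition c4_free :: "('a \<Rightarrow> 'a \<Rightarrow> bool) \<Rightarrow> bool" where
  "c4_free E \<longleftrightarrow> (\<nexists>a b x y. a \<noteq> b \<and> x \<noteq> y \<and> E a x \<and> E b x \<and> E a y \<and> E b y)"

lemma bipartite_sparse_set:
  assumes "finite V" "bipartite V E" "2 * j \<le> Suc (card V)"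
  shows "\<exists>S. sparse_set V E k j S"
proof -
  obtain A where A: "A \<subseteq> V" and cross: "\<forall>u\<in>V. \<forall>v\<in>V. E u v \<longrightarrow> (u \<in> A \<longleftrightarrow> v \<notin> A)"
    using assms(2) unfolding bipartite_def by blast
  have "card A + card (V - A) = card V"
    using A assms(1) by (metis card_Int_Diff inf.absorb_iff2)
  then obtain T where T: "T \<subseteq> V" "j \<le> card T" and indep: "\<forall>u\<in>T. \<forall>v\<in>T. \<not> E u v"
  proof (cases "j \<le> card A")
    case True
    then show ?thesis using that[of A] A cross by blast
  next
    case False
    then have "j \<le> card (V - A)" using \<open>card A + card (V - A) = card V\<close> assms(3) by linarith
    then show ?thesis using that[of "V - A"] cross by blast
  qed
  obtain S where S: "S \<subseteq> T" "card S = j"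
    using obtain_subset_with_card_n[OF T(2)] by blast
  have "max_degree_le E k S"
    unfolding max_degree_le_def
  proof
    fix v assume "v \<in> S"
    with S(1) indep have "{u\<in>S. E v u} = {}" by blast
    then show "card {u\<in>S. E v u} \<le> k" by (metis card.empty le0)
  qed
  then show ?thesis
    using S T(1) unfolding sparse_set_iff by blast
qed

lemma bipartite_no_triangle:
  assumes "simple_graph V E" "bipartite V E"
  shows "\<not> (E a x \<and> E a y \<and> E x y)"
proof
  assume edges: "E a x \<and> E a y \<and> E x y"
  obtain A where "\<forall>u\<in>V. \<forall>v\<in>V. E u v \<longrightarrow> (u \<in> A \<longleftrightarrow> v \<notin> A)"
    using assms(2) unfolding bipartite_def by blast
  moreover have "a \<in> V" "x \<in> V" "y \<in> V"
    using edges assms(1) unfolding simple_graph_def by auto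
  ultimately show False
    using edges by metis
qed

lemma dense_set_degree:
  assumes "dense_set V E k i S" "v \<in> S"
  shows "i \<le> Suc (k + card {u\<in>S. E v u})"
proof (cases "finite S")
  case True
  have S: "S \<subseteq> V" "card S = i" and deg: "card {u\<in>S. compl_graph V E v u} \<le> k"
    using assms unfolding dense_set_def sparse_set_def by auto
  have "S - {v} \<subseteq> {u\<in>S. compl_graph V E v u} \<union> {u\<in>S. E v u}"
    using S(1) assms(2) unfolding compl_graph_def by auto
  then have "card (S - {v}) \<le> card ({u\<in>S. compl_graph V E v u} \<union> {u\<in>S. E v u})"
    using True by (intro card_mono) auto
  also have "\<dots> \<le> card {u\<in>S. compl_graph V E v u} + card {u\<in>S. E v u}"
    by (rule card_Un_le)
  finally have "card (S - {v}) \<le> card {u\<in>S. compl_graph V E v u} + card {u\<in>S. E v u}" .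
  moreover have "card (S - {v}) = i - 1"
    using S(2) assms(2) True by simp
  ultimately show ?thesis
    using deg by linarith
next
  case False
  then show ?thesis
    using assms(1) unfolding dense_set_def sparse_set_def by simp
qed

lemma c4_free_bipartite_no_dense_set:
  assumes graph: "simple_graph V E" "bipartite V E" and "c4_free E"
  shows "\<not> dense_set V E 1 4 S"
proof
  assume dense: "dense_set V E 1 4 S"
  have fin: "finite S" and card_S: "card S = 4"
    using dense unfolding dense_set_def sparse_set_def by (auto intro: card_ge_0_finite)
  have sym: "E u v \<Longrightarrow> E v u" and irrefl: "E u v \<Longrightarrow> u \<noteq> v" for u v
    using graph(1) unfolding simple_graph_def by auto
  have two_nbrs: "2 \<le> card {u\<in>S. E v u}" if "v \<in> S" for v
    using dense_set_degree[OF dense that] by simp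
  obtain a where a: "a \<in> S"
    using card_S by fastforce
  have "\<not> card {u\<in>S. E a u} \<le> Suc 0"
    using two_nbrs[OF a] by simp
  then obtain x y where x: "x \<in> S" "E a x" and y: "y \<in> S" "E a y" and "x \<noteq> y"
    using fin card_le_Suc0_iff_eq[of "{u\<in>S. E a u}"] by auto
  have no_xy: "\<not> E x y" "\<not> E y x"
    using bipartite_no_triangle[OF graph] x y sym by blast+
  have card_rest: "card (S - {x, y}) = 2"
    using x y \<open>x \<noteq> y\<close> fin card_S by (simp add: card_Diff_subset)
  then obtain p q where rest: "S - {x, y} = {p, q}" "p \<noteq> q"
    unfolding card_2_iff by blast
  have all_nbrs: "S - {x, y} \<subseteq> {u\<in>S. E w u}" if "w \<in> {x, y}" for w
  proof -
    have "{u\<in>S. E w u} \<subseteq> S - {x, y}"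
      using that no_xy irrefl by auto
    moreover have "card (S - {x, y}) \<le> card {u\<in>S. E w u}"
      using two_nbrs[of w] that x y card_rest by auto
    ultimately show ?thesis
      using card_seteq[of "S - {x, y}"] fin by blast
  qed
  have "a \<in> S - {x, y}"
    using a x y irrefl by auto
  then obtain z where "z \<in> S - {x, y}" "z \<noteq> a"
    using rest by (metis insertCI)
  then have "E x z" "E y z" "E x a" "E y a"
    using all_nbrs x y sym by blast+
  then show False
    using \<open>c4_free E\<close> \<open>x \<noteq> y\<close> \<open>z \<noteq> a\<close> unfolding c4_free_def by blast
qed

definition restrict_prefix :: "nat \<Rightarrow> (nat \<Rightarrow> nat \<Rightarrow> bool) \<Rightarrow> nat \<Rightarrow> nat \<Rightarrow> bool" where
  "restrict_prefix n E u v \<longleftrightarrow> u < n \<and> v < n \<and> E u v"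

lemma simple_graph_restrict_prefix:
  "simple_graph V E \<Longrightarrow> simple_graph {..<n} (restrict_prefix n E)"
  unfolding simple_graph_def restrict_prefix_def by auto

lemma bipartite_restrict_prefix:
  assumes "bipartite {..<N} E" "n \<le> N"
  shows "bipartite {..<n} (restrict_prefix n E)"
proof -
  obtain A where "\<forall>u\<in>{..<N}. \<forall>v\<in>{..<N}. E u v \<longrightarrow> (u \<in> A \<longleftrightarrow> v \<notin> A)"
    using assms(1) unfolding bipartite_def by blast
  then show ?thesis
    using assms(2) unfolding bipartite_def restrict_prefix_def
    by (intro exI[of _ "A \<inter> {..<n}"]) auto
qed

lemma sparse_set_restrict_prefix:
  assumes "sparse_set {..<n} (restrict_prefix n E) k j S" "n \<le> N"
  shows "sparse_set {..<N} E k j S"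
proof -
  have "{u\<in>S. restrict_prefix n E v u} = {u\<in>S. E v u}" if "v \<in> S" for v
    using assms(1) that unfolding sparse_set_def restrict_prefix_def by auto
  then show ?thesis
    using assms unfolding sparse_set_def by auto
qed

lemma dense_set_restrict_prefix:
  assumes "dense_set {..<n} (restrict_prefix n E) k i S" "n \<le> N"
  shows "dense_set {..<N} E k i S"
proof -
  have "{u\<in>S. compl_graph {..<n} (restrict_prefix n E) v u} = {u\<in>S. compl_graph {..<N} E v u}"
    if "v \<in> S" for v
    using assms that unfolding dense_set_def sparse_set_def restrict_prefix_def compl_graph_def
    by auto
  then show ?thesis
    using assms unfolding dense_set_def sparse_set_def by auto
qed

lemma R_bip_eqI:
  assumes all: "\<And>E. simple_graph {..<Suc n} E \<Longrightarrow> bipartite {..<Suc n} E \<Longrightarrow>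
      (\<exists>S. dense_set {..<Suc n} E k i S) \<or> (\<exists>S. sparse_set {..<Suc n} E k j S)"
    and graph: "simple_graph {..<n} E" "bipartite {..<n} E"
    and no_dense: "\<And>S. \<not> dense_set {..<n} E k i S"
    and no_sparse: "\<And>S. \<not> sparse_set {..<n} E k j S"
  shows "R_bip k i j = Suc n"
  unfolding R_bip_def
proof (rule Least_equality)
  fix m :: nat
  assume m: "\<forall>F. simple_graph {..<m} F \<and> bipartite {..<m} F \<longrightarrow>
      (\<exists>S. dense_set {..<m} F k i S) \<or> (\<exists>S. sparse_set {..<m} F k j S)"
  show "Suc n \<le> m"
  proof (rule ccontr)
    assume "\<not> Suc n \<le> m"
    then have "m \<le> n" by simp
    then show False
      using m[rule_format, of "restrict_prefix m E"] no_dense no_sparse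
        simple_graph_restrict_prefix[OF graph(1)] bipartite_restrict_prefix[OF graph(2)]
        dense_set_restrict_prefix sparse_set_restrict_prefix
      by blast
  qed
qed (use all in blast)

definition sparse_bounded_c4_free :: "nat \<Rightarrow> (nat \<Rightarrow> nat \<Rightarrow> bool) \<Rightarrow> bool" where
  "sparse_bounded_c4_free m E \<longleftrightarrow> simple_graph {..<2 * m} E \<and> bipartite {..<2 * m} E \<and>
     c4_free E \<and> (\<forall>S \<subseteq> {..<2 * m}. max_degree_le E 1 S \<longrightarrow> card S \<le> m)"

lemma R_bip_1_4_eq:
  assumes "sparse_bounded_c4_free m E"
  shows "R_bip 1 4 (Suc m) = Suc (2 * m)"
proof (rule R_bip_eqI)
  show "(\<exists>S. dense_set {..<Suc (2 * m)} F 1 4 S) \<or> (\<exists>S. sparse_set {..<Suc (2 * m)} F 1 (Suc m) S)"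
    if "bipartite {..<Suc (2 * m)} F" for F
    using bipartite_sparse_set[OF _ that] by simp
  show "simple_graph {..<2 * m} E" "bipartite {..<2 * m} E"
    using assms unfolding sparse_bounded_c4_free_def by auto
  then show "\<not> dense_set {..<2 * m} E 1 4 S" for S
    using c4_free_bipartite_no_dense_set assms unfolding sparse_bounded_c4_free_def by blast
  show "\<not> sparse_set {..<2 * m} E 1 (Suc m) S" for S
  proof
    assume "sparse_set {..<2 * m} E 1 (Suc m) S"
    then have "card S \<le> m" "card S = Suc m"
      using assms unfolding sparse_bounded_c4_free_def sparse_set_iff by auto
    then show False by simp
  qed
qed

definition disjoint_union ::
    "nat \<Rightarrow> (nat \<Rightarrow> nat \<Rightarrow> bool) \<Rightarrow> (nat \<Rightarrow> nat \<Rightarrow> bool) \<Rightarrow> nat \<Rightarrow> nat \<Rightarrow> bool" where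
  "disjoint_union n E\<^sub>1 E\<^sub>2 u v \<longleftrightarrow>
     (u < n \<and> v < n \<and> E\<^sub>1 u v) \<or> (n \<le> u \<and> n \<le> v \<and> E\<^sub>2 (u - n) (v - n))"

lemma simple_graph_disjoint_union:
  assumes "simple_graph {..<n\<^sub>1} E\<^sub>1" "simple_graph {..<n\<^sub>2} E\<^sub>2"
  shows "simple_graph {..<n\<^sub>1 + n\<^sub>2} (disjoint_union n\<^sub>1 E\<^sub>1 E\<^sub>2)"
proof -
  have E\<^sub>1: "u < n\<^sub>1 \<and> v < n\<^sub>1 \<and> u \<noteq> v \<and> E\<^sub>1 v u" if "E\<^sub>1 u v" for u v
    using assms(1) that unfolding simple_graph_def by auto
  have E\<^sub>2: "u < n\<^sub>2 \<and> v < n\<^sub>2 \<and> u \<noteq> v \<and> E\<^sub>2 v u" if "E\<^sub>2 u v" for u v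
    using assms(2) that unfolding simple_graph_def by auto
  show ?thesis
    unfolding simple_graph_def disjoint_union_def by (auto dest: E\<^sub>1 E\<^sub>2)
qed

lemma bipartite_disjoint_union:
  assumes "bipartite {..<n\<^sub>1} E\<^sub>1" "bipartite {..<n\<^sub>2} E\<^sub>2"
  shows "bipartite {..<n\<^sub>1 + n\<^sub>2} (disjoint_union n\<^sub>1 E\<^sub>1 E\<^sub>2)"
proof -
  obtain A\<^sub>1 where A\<^sub>1: "\<forall>u\<in>{..<n\<^sub>1}. \<forall>v\<in>{..<n\<^sub>1}. E\<^sub>1 u v \<longrightarrow> (u \<in> A\<^sub>1 \<longleftrightarrow> v \<notin> A\<^sub>1)"
    using assms(1) unfolding bipartite_def by blast
  obtain A\<^sub>2 where A\<^sub>2: "\<forall>u\<in>{..<n\<^sub>2}. \<forall>v\<in>{..<n\<^sub>2}. E\<^sub>2 u v \<longrightarrow> (u \<in> A\<^sub>2 \<longleftrightarrow> v \<notin> A\<^sub>2)"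
    using assms(2) unfolding bipartite_def by blast
  define A where "A = {u. u < n\<^sub>1 \<and> u \<in> A\<^sub>1 \<or> n\<^sub>1 \<le> u \<and> u - n\<^sub>1 \<in> A\<^sub>2}"
  have "u \<in> A \<longleftrightarrow> v \<notin> A"
    if uv: "u < n\<^sub>1 + n\<^sub>2" "v < n\<^sub>1 + n\<^sub>2" and "disjoint_union n\<^sub>1 E\<^sub>1 E\<^sub>2 u v" for u v
    using \<open>disjoint_union n\<^sub>1 E\<^sub>1 E\<^sub>2 u v\<close> unfolding disjoint_union_def
  proof (elim disjE conjE)
    assume "u < n\<^sub>1" "v < n\<^sub>1" "E\<^sub>1 u v"
    then show ?thesis
      using A\<^sub>1 unfolding A_def by auto
  next
    assume "n\<^sub>1 \<le> u" "n\<^sub>1 \<le> v" "E\<^sub>2 (u - n\<^sub>1) (v - n\<^sub>1)"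
    moreover have "u - n\<^sub>1 < n\<^sub>2" "v - n\<^sub>1 < n\<^sub>2"
      using uv \<open>n\<^sub>1 \<le> u\<close> \<open>n\<^sub>1 \<le> v\<close> by auto
    ultimately show ?thesis
      using A\<^sub>2 unfolding A_def by auto
  qed
  then show ?thesis
    unfolding bipartite_def by (intro exI[of _ "A \<inter> {..<n\<^sub>1 + n\<^sub>2}"]) auto
qed

lemma c4_free_disjoint_union:
  assumes "c4_free E\<^sub>1" "c4_free E\<^sub>2"
  shows "c4_free (disjoint_union n E\<^sub>1 E\<^sub>2)"
  unfolding c4_free_def
proof clarify
  fix a b x y
  assume "a \<noteq> b" "x \<noteq> y" and edges: "disjoint_union n E\<^sub>1 E\<^sub>2 a x" "disjoint_union n E\<^sub>1 E\<^sub>2 b x"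
    "disjoint_union n E\<^sub>1 E\<^sub>2 a y" "disjoint_union n E\<^sub>1 E\<^sub>2 b y"
  show False
  proof (cases "a < n")
    case True
    then have "E\<^sub>1 a x" "E\<^sub>1 b x" "E\<^sub>1 a y" "E\<^sub>1 b y"
      using edges unfolding disjoint_union_def by auto
    then show False
      using assms(1) \<open>a \<noteq> b\<close> \<open>x \<noteq> y\<close> unfolding c4_free_def by blast
  next
    case False
    then have "n \<le> b" "n \<le> x" "n \<le> y"
      and "E\<^sub>2 (a - n) (x - n)" "E\<^sub>2 (b - n) (x - n)" "E\<^sub>2 (a - n) (y - n)" "E\<^sub>2 (b - n) (y - n)"
      using edges unfolding disjoint_union_def by auto
    moreover have "a - n \<noteq> b - n" "x - n \<noteq> y - n"
      using False calculation(1-3) \<open>a \<noteq> b\<close> \<open>x \<noteq> y\<close> by auto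
    ultimately show False
      using assms(2) unfolding c4_free_def by blast
  qed
qed

lemma max_degree_le_disjoint_union:
  assumes "max_degree_le (disjoint_union n E\<^sub>1 E\<^sub>2) k S" "finite S"
  shows "max_degree_le E\<^sub>1 k (S \<inter> {..<n})"
    and "max_degree_le E\<^sub>2 k ((\<lambda>u. u - n) ` (S - {..<n}))"
proof -
  let ?N = "\<lambda>v. {u\<in>S. disjoint_union n E\<^sub>1 E\<^sub>2 v u}"
  have deg: "card (?N v) \<le> k" if "v \<in> S" for v
    using assms(1) that unfolding max_degree_le_def by blast
  show "max_degree_le E\<^sub>1 k (S \<inter> {..<n})"
    unfolding max_degree_le_def
  proof
    fix v assume v: "v \<in> S \<inter> {..<n}"
    have "{u \<in> S \<inter> {..<n}. E\<^sub>1 v u} \<subseteq> ?N v"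
      using v unfolding disjoint_union_def by auto
    then have "card {u \<in> S \<inter> {..<n}. E\<^sub>1 v u} \<le> card (?N v)"
      using assms(2) by (intro card_mono) auto
    then show "card {u \<in> S \<inter> {..<n}. E\<^sub>1 v u} \<le> k"
      using deg v by (meson IntD1 le_trans)
  qed
  show "max_degree_le E\<^sub>2 k ((\<lambda>u. u - n) ` (S - {..<n}))"
    unfolding max_degree_le_def
  proof
    fix v' assume "v' \<in> (\<lambda>u. u - n) ` (S - {..<n})"
    then obtain v where "v \<in> S - {..<n}" "v' = v - n"
      by blast
    then have v: "v \<in> S" "n \<le> v" "v' = v - n"
      by auto
    have "{u' \<in> (\<lambda>u. u - n) ` (S - {..<n}). E\<^sub>2 v' u'} \<subseteq> (\<lambda>u. u - n) ` ?N v"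
    proof
      fix u' assume u': "u' \<in> {u' \<in> (\<lambda>u. u - n) ` (S - {..<n}). E\<^sub>2 v' u'}"
      then obtain u where "u \<in> S - {..<n}" "u' = u - n"
        by blast
      then have "u \<in> S" "n \<le> u" "u' = u - n"
        by auto
      moreover have "disjoint_union n E\<^sub>1 E\<^sub>2 v u"
        using u' v calculation unfolding disjoint_union_def by simp
      ultimately show "u' \<in> (\<lambda>u. u - n) ` ?N v"
        by blast
    qed
    then have "card {u' \<in> (\<lambda>u. u - n) ` (S - {..<n}). E\<^sub>2 v' u'} \<le> card ((\<lambda>u. u - n) ` ?N v)"
      using assms(2) by (intro card_mono) auto
    also have "\<dots> \<le> card (?N v)"
      by (rule card_image_le) (use assms(2) in auto)
    finally show "card {u' \<in> (\<lambda>u. u - n) ` (S - {..<n}). E\<^sub>2 v' u'} \<le> k"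
      using deg[OF v(1)] by linarith
  qed
qed

lemma card_split_shift:
  fixes S :: "nat set"
  assumes "finite S"
  shows "card S = card (S \<inter> {..<n}) + card ((\<lambda>u. u - n) ` (S - {..<n}))"
proof -
  have "inj_on (\<lambda>u. u - n) (S - {..<n})"
    by (rule inj_onI) auto
  then have "card ((\<lambda>u. u - n) ` (S - {..<n})) = card (S - {..<n})"
    by (rule card_image)
  then show ?thesis
    using card_Int_Diff[OF assms, of "{..<n}"] by linarith
qed

lemma sparse_bounded_c4_free_disjoint_union:
  assumes E\<^sub>1: "sparse_bounded_c4_free m\<^sub>1 E\<^sub>1" and E\<^sub>2: "sparse_bounded_c4_free m\<^sub>2 E\<^sub>2"
  shows "sparse_bounded_c4_free (m\<^sub>1 + m\<^sub>2) (disjoint_union (2 * m\<^sub>1) E\<^sub>1 E\<^sub>2)"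
proof -
  let ?E = "disjoint_union (2 * m\<^sub>1) E\<^sub>1 E\<^sub>2"
  have bound\<^sub>1: "card T \<le> m\<^sub>1" if "T \<subseteq> {..<2 * m\<^sub>1}" "max_degree_le E\<^sub>1 1 T" for T
    using E\<^sub>1 that unfolding sparse_bounded_c4_free_def by blast
  have bound\<^sub>2: "card T \<le> m\<^sub>2" if "T \<subseteq> {..<2 * m\<^sub>2}" "max_degree_le E\<^sub>2 1 T" for T
    using E\<^sub>2 that unfolding sparse_bounded_c4_free_def by blast
  have "card S \<le> m\<^sub>1 + m\<^sub>2" if S: "S \<subseteq> {..<2 * (m\<^sub>1 + m\<^sub>2)}" "max_degree_le ?E 1 S" for S
  proof -
    have "finite S"
      using S(1) finite_subset by blast
    have "card (S \<inter> {..<2 * m\<^sub>1}) \<le> m\<^sub>1"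
      using max_degree_le_disjoint_union(1)[OF S(2) \<open>finite S\<close>] by (intro bound\<^sub>1) auto
    moreover have "card ((\<lambda>u. u - 2 * m\<^sub>1) ` (S - {..<2 * m\<^sub>1})) \<le> m\<^sub>2"
      using max_degree_le_disjoint_union(2)[OF S(2) \<open>finite S\<close>] S(1) by (intro bound\<^sub>2) auto
    ultimately show ?thesis
      using card_split_shift[OF \<open>finite S\<close>, of "2 * m\<^sub>1"] by linarith
  qed
  moreover have "{..<2 * (m\<^sub>1 + m\<^sub>2)} = {..<2 * m\<^sub>1 + 2 * m\<^sub>2}"
    by simp
  ultimately show ?thesis
    using E\<^sub>1 E\<^sub>2 simple_graph_disjoint_union bipartite_disjoint_union c4_free_disjoint_union
    unfolding sparse_bounded_c4_free_def by metis
qed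

lemma card_le_missing_plus_unique_hits:
  fixes N :: "'i \<Rightarrow> 'b set"
  assumes "finite I" "X \<subseteq> I" "finite Y"
    and row: "\<And>a. a \<in> X \<Longrightarrow> card (N a \<inter> Y) \<le> 1"
    and col: "\<And>a a' b. a \<in> X \<Longrightarrow> a' \<in> X \<Longrightarrow> b \<in> Y \<Longrightarrow> b \<in> N a \<Longrightarrow> b \<in> N a' \<Longrightarrow> a = a'"
  shows "card X \<le> card {i\<in>I. N i \<inter> Y = {}} + card {b. \<exists>i\<in>I. N i \<inter> Y = {b}}"
proof -
  define X\<^sub>1 where "X\<^sub>1 = {a\<in>X. N a \<inter> Y \<noteq> {}}"
  define hit where "hit a = the_elem (N a \<inter> Y)" for a
  have hit: "N a \<inter> Y = {hit a}" if "a \<in> X\<^sub>1" for a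
  proof -
    have "0 < card (N a \<inter> Y)"
      using that \<open>finite Y\<close> unfolding X\<^sub>1_def by (simp add: card_gt_0_iff)
    with row[of a] that have "card (N a \<inter> Y) = 1"
      unfolding X\<^sub>1_def by simp
    then obtain b where "N a \<inter> Y = {b}"
      by (rule card_1_singletonE)
    then show ?thesis
      unfolding hit_def by simp
  qed
  have "inj_on hit X\<^sub>1"
  proof (rule inj_onI)
    fix a a' assume "a \<in> X\<^sub>1" "a' \<in> X\<^sub>1" "hit a = hit a'"
    then show "a = a'"
      using hit[of a] hit[of a'] col[of a a' "hit a"] unfolding X\<^sub>1_def by auto
  qed
  then have "card X\<^sub>1 = card (hit ` X\<^sub>1)"
    by (rule card_image[symmetric])
  also have "\<dots> \<le> card {b. \<exists>i\<in>I. N i \<inter> Y = {b}}"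
  proof (rule card_mono)
    show "finite {b. \<exists>i\<in>I. N i \<inter> Y = {b}}"
      by (rule finite_subset[OF _ \<open>finite Y\<close>]) blast
    show "hit ` X\<^sub>1 \<subseteq> {b. \<exists>i\<in>I. N i \<inter> Y = {b}}"
      using hit \<open>X \<subseteq> I\<close> unfolding X\<^sub>1_def by blast
  qed
  finally have "card X\<^sub>1 \<le> card {b. \<exists>i\<in>I. N i \<inter> Y = {b}}" .
  moreover have "card X \<le> card {i\<in>I. N i \<inter> Y = {}} + card X\<^sub>1"
  proof -
    have "X \<subseteq> {i\<in>I. N i \<inter> Y = {}} \<union> X\<^sub>1"
      using \<open>X \<subseteq> I\<close> unfolding X\<^sub>1_def by blast
    then have "card X \<le> card ({i\<in>I. N i \<inter> Y = {}} \<union> X\<^sub>1)"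
      using \<open>finite I\<close> \<open>X \<subseteq> I\<close> unfolding X\<^sub>1_def
      by (intro card_mono) (auto intro: finite_subset)
    also have "\<dots> \<le> card {i\<in>I. N i \<inter> Y = {}} + card X\<^sub>1"
      by (rule card_Un_le)
    finally show ?thesis .
  qed
  ultimately show ?thesis
    by linarith
qed

text \<open>Row \<open>i\<close> of \<open>L\<close> is the vertex \<open>i\<close> and the point \<open>b\<close> is the vertex \<open>length L + b\<close>; points
outside \<open>{..<length L}\<close> are ignored.\<close>

definition incidence_graph :: "nat list list \<Rightarrow> nat \<Rightarrow> nat \<Rightarrow> bool" where
  "incidence_graph L u v \<longleftrightarrow>
     (u < length L \<and> length L \<le> v \<and> v < 2 * length L \<and> v - length L \<in> set (L ! u)) \<or>
     (v < length L \<and> length L \<le> u \<and> u < 2 * length L \<and> u - length L \<in> set (L ! v))"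

definition rows_meet_at_most_once :: "nat list list \<Rightarrow> bool" where
  "rows_meet_at_most_once L \<longleftrightarrow>
     (\<forall>i<length L. \<forall>k<length L. i \<noteq> k \<longrightarrow> card (set (L ! i) \<inter> set (L ! k)) \<le> 1)"

definition rows_missing :: "nat list list \<Rightarrow> nat set \<Rightarrow> nat set" where
  "rows_missing L Y = {i\<in>{..<length L}. set (L ! i) \<inter> Y = {}}"

definition unique_hits :: "nat list list \<Rightarrow> nat set \<Rightarrow> nat set" where
  "unique_hits L Y = {b. \<exists>i\<in>{..<length L}. set (L ! i) \<inter> Y = {b}}"

lemma simple_graph_incidence_graph: "simple_graph {..<2 * length L} (incidence_graph L)"
  unfolding simple_graph_def incidence_graph_def by auto

lemma bipartite_incidence_graph: "bipartite {..<2 * length L} (incidence_graph L)"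
  unfolding bipartite_def incidence_graph_def by (intro exI[of _ "{..<length L}"]) auto

lemma rows_meet_at_most_onceD:
  assumes "rows_meet_at_most_once L" "i < length L" "k < length L" "i \<noteq> k"
    and "p \<in> set (L ! i) \<inter> set (L ! k)" "q \<in> set (L ! i) \<inter> set (L ! k)"
  shows "p = q"
  using assms card_le_Suc0_iff_eq[of "set (L ! i) \<inter> set (L ! k)"]
  unfolding rows_meet_at_most_once_def by auto

lemma c4_free_incidence_graph:
  assumes "rows_meet_at_most_once L"
  shows "c4_free (incidence_graph L)"
  unfolding c4_free_def
proof clarify
  fix a b x y
  assume "a \<noteq> b" "x \<noteq> y" and edges: "incidence_graph L a x" "incidence_graph L b x"
    "incidence_graph L a y" "incidence_graph L b y"
  let ?m = "length L"
  show False
  proof (cases "a < ?m")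
    case True
    then have "b < ?m" "?m \<le> x" "?m \<le> y"
      and "x - ?m \<in> set (L ! a) \<inter> set (L ! b)" "y - ?m \<in> set (L ! a) \<inter> set (L ! b)"
      using edges unfolding incidence_graph_def by auto
    then have "x - ?m = y - ?m"
      using rows_meet_at_most_onceD[OF assms True _ \<open>a \<noteq> b\<close>] by blast
    then show False
      using \<open>?m \<le> x\<close> \<open>?m \<le> y\<close> \<open>x \<noteq> y\<close> by simp
  next
    case False
    then have "x < ?m" "y < ?m" "?m \<le> b"
      and "a - ?m \<in> set (L ! x) \<inter> set (L ! y)" "b - ?m \<in> set (L ! x) \<inter> set (L ! y)"
      using edges unfolding incidence_graph_def by auto
    then have "a - ?m = b - ?m"
      using rows_meet_at_most_onceD[OF assms _ _ \<open>x \<noteq> y\<close>] by blast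
    then show False
      using False \<open>?m \<le> b\<close> \<open>a \<noteq> b\<close> by simp
  qed
qed

text \<open>A 1-sparse set \<open>S\<close> contains, besides its points \<open>Y\<close>, only rows missing \<open>Y\<close> and rows
meeting \<open>Y\<close> in a single point, and distinct rows of the second kind meet \<open>Y\<close> in distinct
points.\<close>

lemma card_sparse_incidence_graph_le:
  assumes S: "S \<subseteq> {..<2 * length L}" "max_degree_le (incidence_graph L) 1 S"
  defines "Y \<equiv> {b. b < length L \<and> length L + b \<in> S}"
  shows "card S \<le> card Y + card (rows_missing L Y) + card (unique_hits L Y)"
proof -
  let ?m = "length L" and ?G = "incidence_graph L"
  have "finite S"
    using S(1) finite_subset by blast
  have deg: "card {u\<in>S. ?G v u} \<le> 1" if "v \<in> S" for v
    using S(2) that unfolding max_degree_le_def by blast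
  have "(\<lambda>u. u - ?m) ` (S - {..<?m}) = Y"
    using S(1) unfolding Y_def by (force simp: image_iff)
  then have card_S: "card S = card (S \<inter> {..<?m}) + card Y"
    using card_split_shift[OF \<open>finite S\<close>] by metis
  have row: "card (set (L ! a) \<inter> Y) \<le> 1" if "a \<in> S \<inter> {..<?m}" for a
  proof -
    have "card (set (L ! a) \<inter> Y) = card ((+) ?m ` (set (L ! a) \<inter> Y))"
      by (simp add: card_image)
    also have "\<dots> \<le> card {u\<in>S. ?G a u}"
      using that \<open>finite S\<close> unfolding Y_def incidence_graph_def by (intro card_mono) auto
    finally show ?thesis
      using deg that by fastforce
  qed
  have col: "a = a'"
    if "a \<in> S \<inter> {..<?m}" "a' \<in> S \<inter> {..<?m}" "b \<in> Y" "b \<in> set (L ! a)" "b \<in> set (L ! a')"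
    for a a' b
  proof -
    have "?m + b \<in> S" "a \<in> {u\<in>S. ?G (?m + b) u}" "a' \<in> {u\<in>S. ?G (?m + b) u}"
      using that unfolding Y_def incidence_graph_def by auto
    then show ?thesis
      using deg card_le_Suc0_iff_eq[of "{u\<in>S. ?G (?m + b) u}"] \<open>finite S\<close> by auto
  qed
  have "card (S \<inter> {..<?m}) \<le> card (rows_missing L Y) + card (unique_hits L Y)"
    unfolding rows_missing_def unique_hits_def
    by (rule card_le_missing_plus_unique_hits[OF _ _ _ row col]) (auto simp: Y_def)
  then show ?thesis
    using card_S by linarith
qed

fun singleton_of :: "'a list \<Rightarrow> 'a list" where
  "singleton_of [] = []"
| "singleton_of (b # c) = (if \<forall>x\<in>set c. x = b then [b] else [])"

lemma singleton_of_eq: "set c = {b} \<Longrightarrow> singleton_of c = [b]"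
  by (cases c) auto

text \<open>Checks the bound of \<open>card_sparse_incidence_graph_le\<close> for all \<open>Y\<^sub>0 \<union> Y\<close> with \<open>Y \<subseteq> set bs\<close>,
where \<open>k = card Y\<^sub>0\<close> and \<open>hs ! i\<close> lists the points of \<open>Y\<^sub>0\<close> on row \<open>i\<close>.\<close>

fun sparse_bound_check :: "nat list list \<Rightarrow> nat \<Rightarrow> nat list list \<Rightarrow> nat list \<Rightarrow> bool" where
  "sparse_bound_check L k hs [] \<longleftrightarrow>
     k + length (filter (\<lambda>h. h = []) hs) + length (remdups (concat (map singleton_of hs))) \<le> length L"
| "sparse_bound_check L k hs (b # bs) \<longleftrightarrow>
     sparse_bound_check L (Suc k) (map2 (\<lambda>l h. if b \<in> set l then b # h else h) L hs) bs \<and>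
     sparse_bound_check L k hs bs"

lemma sparse_bound_check_sound:
  assumes "sparse_bound_check L k hs bs" "distinct bs" "length hs = length L"
    "\<forall>i<length L. set (hs ! i) = set (L ! i) \<inter> Y\<^sub>0" "finite Y\<^sub>0" "card Y\<^sub>0 \<le> k"
    "set bs \<inter> Y\<^sub>0 = {}" "Y \<subseteq> set bs"
  shows "card (Y\<^sub>0 \<union> Y) + card (rows_missing L (Y\<^sub>0 \<union> Y)) + card (unique_hits L (Y\<^sub>0 \<union> Y))
    \<le> length L"
  using assms
proof (induction bs arbitrary: k hs Y\<^sub>0 Y)
  case Nil
  then have "Y = {}" by simp
  have "hs ! i = [] \<longleftrightarrow> set (L ! i) \<inter> Y\<^sub>0 = {}" if "i < length L" for i
    using Nil.prems(4) that by (metis set_empty)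
  then have "rows_missing L Y\<^sub>0 = {i. i < length hs \<and> hs ! i = []}"
    using Nil.prems(3) unfolding rows_missing_def by auto
  then have missing: "card (rows_missing L Y\<^sub>0) = length (filter (\<lambda>h. h = []) hs)"
    by (simp add: length_filter_conv_card)
  have "unique_hits L Y\<^sub>0 \<subseteq> set (remdups (concat (map singleton_of hs)))"
  proof
    fix b assume "b \<in> unique_hits L Y\<^sub>0"
    then obtain i where "i < length hs" "set (hs ! i) = {b}"
      using Nil.prems(3,4) unfolding unique_hits_def by auto
    then have "hs ! i \<in> set hs" "singleton_of (hs ! i) = [b]"
      by (simp_all add: singleton_of_eq)
    then show "b \<in> set (remdups (concat (map singleton_of hs)))"
      by (auto intro!: bexI[of _ "hs ! i"])
  qed
  then have "card (unique_hits L Y\<^sub>0) \<le> card (set (remdups (concat (map singleton_of hs))))"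
    by (intro card_mono) auto
  also have "\<dots> = length (remdups (concat (map singleton_of hs)))"
    by (rule distinct_card) simp
  finally have hits: "card (unique_hits L Y\<^sub>0) \<le> length (remdups (concat (map singleton_of hs)))" .
  then show ?case
    using Nil.prems(1,6) missing hits \<open>Y = {}\<close> by simp
next
  case (Cons b bs)
  show ?case
  proof (cases "b \<in> Y")
    case True
    let ?hs = "map2 (\<lambda>l h. if b \<in> set l then b # h else h) L hs"
    have "card (insert b Y\<^sub>0 \<union> (Y - {b})) + card (rows_missing L (insert b Y\<^sub>0 \<union> (Y - {b})))
        + card (unique_hits L (insert b Y\<^sub>0 \<union> (Y - {b}))) \<le> length L"
    proof (rule Cons.IH)
      show "sparse_bound_check L (Suc k) ?hs bs"
        using Cons.prems(1) by simp
      show "\<forall>i<length L. set (?hs ! i) = set (L ! i) \<inter> insert b Y\<^sub>0"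
        using Cons.prems(3,4) by auto
      show "card (insert b Y\<^sub>0) \<le> Suc k"
        using Cons.prems(5-7) by (simp add: card_insert_if)
    qed (use Cons.prems in auto)
    moreover have "insert b Y\<^sub>0 \<union> (Y - {b}) = Y\<^sub>0 \<union> Y"
      using True by auto
    ultimately show ?thesis
      by simp
  next
    case False
    then show ?thesis
      using Cons.IH[of k hs Y\<^sub>0 Y] Cons.prems by auto
  qed
qed

definition verified_configuration :: "nat list list \<Rightarrow> bool" where
  "verified_configuration L \<longleftrightarrow> rows_meet_at_most_once L \<and>
     sparse_bound_check L 0 (map (\<lambda>_. []) L) [0..<length L]"

lemma sparse_bounded_c4_free_incidence_graph:
  assumes "verified_configuration L"
  shows "sparse_bounded_c4_free (length L) (incidence_graph L)"
proof -
  have check: "sparse_bound_check L 0 (map (\<lambda>_. []) L) [0..<length L]"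
    using assms unfolding verified_configuration_def by blast
  have "card S \<le> length L"
    if "S \<subseteq> {..<2 * length L}" "max_degree_le (incidence_graph L) 1 S" for S
  proof -
    let ?Y = "{b. b < length L \<and> length L + b \<in> S}"
    have "card ({} \<union> ?Y) + card (rows_missing L ({} \<union> ?Y)) + card (unique_hits L ({} \<union> ?Y))
        \<le> length L"
      by (rule sparse_bound_check_sound[OF check]) auto
    then show ?thesis
      using card_sparse_incidence_graph_le[OF that] by simp
  qed
  then show ?thesis
    using assms unfolding sparse_bounded_c4_free_def verified_configuration_def
    by (simp add: simple_graph_incidence_graph bipartite_incidence_graph c4_free_incidence_graph)
qed

text \<open>The first configuration is the Fano plane.\<close>

definition config7 :: "nat list list" where
  "config7 = [[0, 1, 3], [1, 2, 4], [2, 3, 5], [3, 4, 6], [4, 5, 0], [5, 6, 1], [6, 0, 2]]"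

definition config8 :: "nat list list" where
  "config8 = [[1, 3, 6], [0, 1, 5], [1, 2, 7], [2, 3, 4], [4, 5, 7], [2, 5, 6], [0, 4, 6], [0, 3, 7]]"

definition config10 :: "nat list list" where
  "config10 = [[0, 5, 9], [0, 1, 4], [3, 4, 7], [1, 7, 8, 9], [2, 4, 9], [4, 6, 8], [3, 5, 8],
     [0, 2, 3, 6], [2, 5, 7], [1, 5, 6]]"

definition config11 :: "nat list list" where
  "config11 = [[0, 4, 6], [0, 1, 3, 7], [2, 4, 7, 9], [5, 7, 8, 10], [3, 4, 10], [6, 8, 9],
     [0, 2, 8], [1, 4, 8], [2, 3, 5, 6], [1, 5, 9], [1, 6, 10]]"

lemma verified_configurations:
  "list_all verified_configuration [config7, config8, config10, config11]"
  unfolding config7_def config8_def config10_def config11_def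
    verified_configuration_def rows_meet_at_most_once_def
  by code_simp

lemma sparse_bounded_c4_free_exists:
  assumes "14 \<le> m"
  shows "\<exists>E. sparse_bounded_c4_free m E"
  using assms
proof (induction m rule: less_induct)
  case (less m)
  have base: "\<exists>E. sparse_bounded_c4_free m E" if m: "m \<in> {7, 8, 10, 11}" for m
  proof -
    have "map length [config7, config8, config10, config11] = [7, 8, 10, 11]"
      by (simp add: config7_def config8_def config10_def config11_def eval_nat_numeral)
    then obtain L where "L \<in> set [config7, config8, config10, config11]" "length L = m"
      using m by auto
    then show ?thesis
      using verified_configurations sparse_bounded_c4_free_incidence_graph
      by (metis list.pred_set)
  qed
  have add: "\<exists>E. sparse_bounded_c4_free (m\<^sub>1 + m\<^sub>2) E"
    if "\<exists>E. sparse_bounded_c4_free m\<^sub>1 E" "\<exists>E. sparse_bounded_c4_free m\<^sub>2 E" for m\<^sub>1 m\<^sub>2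
    using that sparse_bounded_c4_free_disjoint_union by blast
  show ?case
  proof (cases "m \<le> 20")
    case True
    then have "m = 7 + 7 \<or> m = 7 + 8 \<or> m = 8 + 8 \<or> m = 7 + 10 \<or> m = 8 + 10 \<or> m = 8 + 11 \<or>
        m = 10 + 10"
      using less.prems by linarith
    moreover have "\<exists>E. sparse_bounded_c4_free 7 E" "\<exists>E. sparse_bounded_c4_free 8 E"
      "\<exists>E. sparse_bounded_c4_free 10 E" "\<exists>E. sparse_bounded_c4_free 11 E"
      using base by simp_all
    ultimately show ?thesis
      using add by metis
  next
    case False
    then show ?thesis
      using add[OF less.IH[of "m - 7"] base[of 7]] by simp
  qed
qed

lemma R_bip_1_4:
  assumes "15 \<le> j"
  shows "R_bip 1 4 j = 2 * j - 1"
proof -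
  have "14 \<le> j - 1"
    using assms by simp
  then obtain E where "sparse_bounded_c4_free (j - 1) E"
    using sparse_bounded_c4_free_exists by blast
  then have "R_bip 1 4 (Suc (j - 1)) = Suc (2 * (j - 1))"
    by (rule R_bip_1_4_eq)
  then show ?thesis
    using assms by (simp add: Suc_diff_Suc)
qed

theorem theorem5p4:
  fixes j :: nat
  assumes "j \<ge> 20 \<or> j \<in> {15, 16, 17}"
  shows "R_bip 1 4 j = 2 * j - 1"
  using assms by (intro R_bip_1_4) auto

end
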